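(* Fix an integer $L\ge 1$ and a real $r\in[0,\frac{L}{L+1})$. There exist an integer $N=N(r,L)$ and a function $g_{r,L}:\mathbb{N}\to[0,\infty)$ with $g_{r,L}(n)\to 0$ as $n\to\infty$ such that the following holds. For every integer $q\ge 2$ and every $n\ge N$ with $rn\in\mathbb{N}$, every $(r,L)$ list-decodable code $C\subseteq[q]^n$ satisfies $$|C|\le \max\{q(1+g_{r,L}(n)),\,L\}\cdot q^{\,n-(\lfloor\frac{L+1}{L}rn\rfloor+1)}.$$
   Context: $[q]=\{1,\dots,q\}$. A code of length $n$ over an alphabet of size $q$ is a subset $C\subseteq[q]^n$. The Hamming distance $d(x,y)$ of $x,y\in[q]^n$ is the number of coordinates where they differ, and $B_t(v)$ is the set of vectors of $[q]^n$ at Hamming distance at most $t$ from $v$. A code $C\subseteq[q]^n$ is $(r,L)$ list-decodable if $|B_{rn}(v)\cap C|\le L$ for every $v\in[q]^n$. *)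

theory Defs
  imports "HOL-Analysis.Analysis"
begin

text \<open>Vectors of [q]^n are represented as functions nat => nat, with coordinates
 0..n-1 taking values in {1..q} and value undefined (extensional) elsewhere.\<close>

definition qspace :: "nat \<Rightarrow> nat \<Rightarrow> (nat \<Rightarrow> nat) set" where
  "qspace q n = PiE {0..<n} (\<lambda>_. {1..q})"

definition hamming :: "nat \<Rightarrow> (nat \<Rightarrow> nat) \<Rightarrow> (nat \<Rightarrow> nat) \<Rightarrow> nat" where
  "hamming n x y = card {i \<in> {0..<n}. x i \<noteq> y i}"

definition hball :: "nat \<Rightarrow> nat \<Rightarrow> real \<Rightarrow> (nat \<Rightarrow> nat) \<Rightarrow> (nat \<Rightarrow> nat) set" where
  "hball q n t v = {x \<in> qspace q n. real (hamming n x v) \<le> t}"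

definition list_decodable :: "nat \<Rightarrow> nat \<Rightarrow> real \<Rightarrow> nat \<Rightarrow> (nat \<Rightarrow> nat) set \<Rightarrow> bool" where
  "list_decodable q n r L C \<longleftrightarrow> C \<subseteq> qspace q n \<and>
     (\<forall>v \<in> qspace q n. card (hball q n (r * real n) v \<inter> C) \<le> L)"

end

theory Submission
  imports Defs
begin

text \<open>Put \<open>M = \<lfloor>(L + 1) r n / L\<rfloor> + 1\<close> and group the codewords by their last \<open>n - M\<close>
coordinates. There are at most \<open>q ^ (n - M)\<close> groups, so it suffices to bound every group \<open>D\<close>
of more than \<open>L\<close> codewords by \<open>q (1 + 2 (L - 1) / M)\<close>.

Say that \<open>x \<in> D\<close> collides at a coordinate \<open>j < M\<close> if another word of \<open>D\<close> agrees with \<open>x\<close>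
there. If every word of some nonempty part of \<open>D\<close> collides at \<open>L\<close> or more coordinates, one
greedily finds \<open>L + 1\<close> words of \<open>D\<close> and \<open>L\<close> coordinates at each of which two of them collide.
A centre taking the shared symbol at these coordinates, the common tail of \<open>D\<close>, and handing
out the other \<open>M - L\<close> coordinates among the \<open>L + 1\<close> words is within distance \<open>r n\<close> of all
of them, because \<open>(L + 1) (M - r n) - 2 L \<le> M - L\<close>; this contradicts list decodability.
Otherwise, deleting words with fewer than \<open>L\<close> collisions one at a time shows that the sum over
\<open>j < M\<close> of \<open>|D| - |{x j | x \<in> D}|\<close> is at most \<open>(L - 1) |D|\<close>, while every summand is at least
\<open>|D| - q\<close>; hence \<open>M (|D| - q) \<le> (L - 1) |D|\<close>.\<close>

lemma finite_qspace: "finite (qspace q n)"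
  unfolding qspace_def by (simp add: finite_PiE)

lemma card_qspace: "card (qspace q n) = q ^ n"
  unfolding qspace_def by (simp add: card_PiE)

lemma card_le_qspace_power: "C \<subseteq> qspace q n \<Longrightarrow> card C \<le> q ^ n"
  unfolding card_qspace[symmetric] by (rule card_mono[OF finite_qspace])

lemma qspace_coordinate: "x \<in> qspace q n \<Longrightarrow> j < n \<Longrightarrow> x j \<in> {1..q}"
  unfolding qspace_def by (auto simp: PiE_iff)

lemma ex_map_fibres_card_ge:
  assumes "finite I" "finite A" "sum d I \<le> card A"
  shows "\<exists>f. \<forall>i\<in>I. d i \<le> card {a\<in>A. f a = i}"
  using assms
proof (induction I arbitrary: A rule: finite_induct)
  case empty
  then show ?case by auto
next
  case (insert i I)
  have "d i \<le> card A"
    using insert by simp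
  then obtain A' where A': "A' \<subseteq> A" "card A' = d i" "finite A'"
    by (meson obtain_subset_with_card_n)
  have "sum d I \<le> card (A - A')"
    using insert A' by (simp add: card_Diff_subset)
  then obtain f where f: "\<forall>i\<in>I. d i \<le> card {a\<in>A - A'. f a = i}"
    using insert.IH[of "A - A'"] insert.prems by auto
  define g where "g a = (if a \<in> A' then i else f a)" for a
  have "A' \<subseteq> {a\<in>A. g a = i}"
    using A' by (auto simp: g_def)
  then have "d i \<le> card {a\<in>A. g a = i}"
    using A'(2) insert.prems(1) card_mono[of "{a\<in>A. g a = i}" A'] by simp
  moreover have "d i' \<le> card {a\<in>A. g a = i'}" if "i' \<in> I" for i'
  proof -
    have "{a\<in>A - A'. f a = i'} \<subseteq> {a\<in>A. g a = i'}"
      using that insert.hyps by (auto simp: g_def)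
    then have "card {a\<in>A - A'. f a = i'} \<le> card {a\<in>A. g a = i'}"
      using insert.prems by (intro card_mono) auto
    then show ?thesis
      using f that by force
  qed
  ultimately show ?case by auto
qed

lemma hamming_le_diff_card:
  assumes "X \<subseteq> {0..<M}" and "\<And>i. i < n \<Longrightarrow> w i \<noteq> v i \<Longrightarrow> i < M \<and> i \<notin> X"
  shows "hamming n w v \<le> M - card X"
proof -
  have "{i\<in>{0..<n}. w i \<noteq> v i} \<subseteq> {0..<M} - X"
    using assms(2) by auto
  then have "hamming n w v \<le> card ({0..<M} - X)"
    unfolding hamming_def by (intro card_mono) auto
  also have "\<dots> = M - card X"
    using assms(1) finite_subset[OF assms(1)] by (simp add: card_Diff_subset)
  finally show ?thesis .
qed

lemma ex_centre_within_budget: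
  assumes S: "S \<subseteq> qspace q n" "S \<noteq> {}"
    and agree: "\<forall>x\<in>S. \<forall>y\<in>S. \<forall>i\<in>{M..<n}. x i = y i"
    and J: "J \<subseteq> {0..<M}" "\<forall>j\<in>J. j < n \<longrightarrow> c j \<in> {1..q}"
    and budget: "(\<Sum>w\<in>S. (M - t) - card {j\<in>J. w j = c j}) \<le> M - card J"
  shows "\<exists>v\<in>qspace q n. \<forall>w\<in>S. hamming n w v \<le> t"
proof -
  define A where "A = {0..<M} - J"
  define agr where "agr w = {j\<in>J. w j = c j}" for w :: "nat \<Rightarrow> nat"
  have fin: "finite S" "finite J" "finite A"
    using S(1) J(1) finite_qspace finite_subset unfolding A_def by blast+
  have "card A = M - card J"
    unfolding A_def using J fin by (simp add: card_Diff_subset)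
  then have "(\<Sum>w\<in>S. (M - t) - card (agr w)) \<le> card A"
    using budget unfolding agr_def by simp
  then obtain f where f: "\<forall>w\<in>S. (M - t) - card (agr w) \<le> card {j\<in>A. f j = w}"
    using ex_map_fibres_card_ge[OF fin(1) fin(3)] by blast
  obtain p where p: "p \<in> S"
    using S by auto
  \<comment> \<open>A coordinate \<open>j \<in> A\<close> is spent on the word \<open>f j\<close>; beyond \<open>M\<close> all of \<open>S\<close> agrees anyway.\<close>
  define v where "v = restrict (\<lambda>j. if j \<in> J then c j else if f j \<in> S then f j j else p j) {0..<n}"
  have "v j \<in> {1..q}" if "j < n" for j
    using J(2) S(1) p that qspace_coordinate[of "f j" q n j] qspace_coordinate[of p q n j]
    unfolding v_def by auto
  then have "v \<in> qspace q n"
    unfolding qspace_def v_def by (simp add: PiE_iff)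
  moreover have "hamming n w v \<le> t" if w: "w \<in> S" for w
  proof -
    define alloc where "alloc = {j\<in>A. f j = w}"
    have "hamming n w v \<le> M - card (agr w \<union> alloc)"
    proof (rule hamming_le_diff_card)
      show "agr w \<union> alloc \<subseteq> {0..<M}"
        using J unfolding agr_def alloc_def A_def by auto
      fix i
      assume i: "i < n" "w i \<noteq> v i"
      have "i < M"
      proof (rule ccontr)
        assume "\<not> i < M"
        then have "i \<notin> J" "\<forall>y\<in>S. w i = y i"
          using J(1) agree w i(1) by auto
        then show False
          using i p unfolding v_def by (cases "f i \<in> S") (auto, metis)
      qed
      moreover have "i \<notin> agr w" "i \<notin> alloc"
        using i w unfolding v_def agr_def alloc_def A_def by auto
      ultimately show "i < M \<and> i \<notin> agr w \<union> alloc"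
        by simp
    qed
    also have "card (agr w \<union> alloc) = card (agr w) + card alloc"
      using fin unfolding agr_def alloc_def A_def by (intro card_Un_disjoint) auto
    also have "M - (card (agr w) + card alloc) \<le> t"
    proof -
      have "(M - t) - card (agr w) \<le> card alloc"
        using f w unfolding alloc_def by blast
      then show ?thesis by linarith
    qed
    finally show ?thesis .
  qed
  ultimately show ?thesis by blast
qed

lemma ex_centre_of_collisions:
  assumes S: "S \<subseteq> qspace q n" "S \<noteq> {}" "card S \<le> k + 1"
    and agree: "\<forall>x\<in>S. \<forall>y\<in>S. \<forall>i\<in>{M..<n}. x i = y i"
    and J: "J \<subseteq> {0..<M}" "card J = k" "\<forall>j\<in>J. \<exists>y\<in>S. \<exists>z\<in>S. y \<noteq> z \<and> y j = z j"
    and "M \<le> n" "t + k \<le> M" "(k + 1) * (M - t) \<le> M + k"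
  shows "\<exists>v\<in>qspace q n. \<forall>w\<in>S. hamming n w v \<le> t"
proof -
  obtain y z where yz: "\<forall>j\<in>J. y j \<in> S \<and> z j \<in> S \<and> y j \<noteq> z j \<and> y j j = z j j"
    using J(3) by metis
  define c where "c j = y j j" for j
  define agr where "agr w = card {j\<in>J. w j = c j}" for w :: "nat \<Rightarrow> nat"
  have fin: "finite S" "finite J"
    using S(1) J(1) finite_qspace finite_subset by blast+
  have agr_le: "agr w \<le> M - t" for w
  proof -
    have "agr w \<le> card J"
      unfolding agr_def using fin(2) by (intro card_mono) auto
    then show ?thesis using J(2) \<open>t + k \<le> M\<close> by linarith
  qed
  have "2 * k \<le> (\<Sum>w\<in>S. agr w)"
  proof -
    have "(\<Sum>w\<in>S. agr w) = (\<Sum>w\<in>S. \<Sum>j\<in>J. of_bool (w j = c j))"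
      unfolding agr_def using fin by (simp add: Int_def)
    also have "\<dots> = (\<Sum>j\<in>J. card {w\<in>S. w j = c j})"
      using fin by (subst sum.swap) (simp add: Int_def)
    also have "(\<Sum>j\<in>J. 2) \<le> \<dots>"
    proof (rule sum_mono)
      fix j assume "j \<in> J"
      then have "{y j, z j} \<subseteq> {w\<in>S. w j = c j}" "card {y j, z j} = 2"
        using yz unfolding c_def by auto
      then show "2 \<le> card {w\<in>S. w j = c j}"
        using fin(1) card_mono[of "{w\<in>S. w j = c j}" "{y j, z j}"] by simp
    qed
    finally show ?thesis using J(2) by simp
  qed
  moreover have "(\<Sum>w\<in>S. (M - t) - agr w) + (\<Sum>w\<in>S. agr w) = card S * (M - t)"
    using agr_le by (simp add: sum.distrib[symmetric] le_add_diff_inverse2 del: diff_diff_left)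
  moreover have "card S * (M - t) \<le> M + k"
    using S(3) \<open>(k + 1) * (M - t) \<le> M + k\<close> by (meson le_trans mult_le_mono1)
  ultimately have "(\<Sum>w\<in>S. (M - t) - agr w) \<le> M - card J"
    using J(2) by linarith
  moreover have "\<forall>j\<in>J. j < n \<longrightarrow> c j \<in> {1..q}"
    using yz S(1) qspace_coordinate unfolding c_def by blast
  ultimately show ?thesis
    using ex_centre_within_budget[OF S(1,2) agree J(1)] unfolding agr_def by blast
qed

definition collision_degree :: "nat \<Rightarrow> (nat \<Rightarrow> nat) set \<Rightarrow> (nat \<Rightarrow> nat) \<Rightarrow> nat" where
  "collision_degree M F x = card {j\<in>{0..<M}. \<exists>z\<in>F. z \<noteq> x \<and> z j = x j}"

definition collision_excess :: "nat \<Rightarrow> (nat \<Rightarrow> nat) set \<Rightarrow> nat" where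
  "collision_excess M F = (\<Sum>j\<in>{0..<M}. card F - card ((\<lambda>x. x j) ` F))"

lemma collision_excess_le_remove:
  assumes "finite F" "x \<in> F"
  shows "collision_excess M F \<le> collision_excess M (F - {x}) + collision_degree M F x"
proof -
  define P where "P = {j\<in>{0..<M}. \<exists>z\<in>F. z \<noteq> x \<and> z j = x j}"
  have card_F: "card F = card (F - {x}) + 1"
    using card_Suc_Diff1[OF assms] by simp
  have "card F - card ((\<lambda>x. x j) ` F)
      \<le> card (F - {x}) - card ((\<lambda>x. x j) ` (F - {x})) + of_bool (j \<in> P)"
    if "j \<in> {0..<M}" for j
  proof -
    have image: "(\<lambda>x. x j) ` F = insert (x j) ((\<lambda>x. x j) ` (F - {x}))"
      using assms(2) by auto
    have le: "card ((\<lambda>x. x j) ` (F - {x})) \<le> card (F - {x})"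
      using assms(1) by (intro card_image_le) simp
    have mem: "x j \<in> (\<lambda>x. x j) ` (F - {x}) \<longleftrightarrow> j \<in> P"
    proof
      assume "x j \<in> (\<lambda>x. x j) ` (F - {x})"
      then obtain z where "z \<in> F - {x}" "x j = z j"
        by blast
      then show "j \<in> P"
        using that unfolding P_def by auto
    next
      assume "j \<in> P"
      then obtain z where "z \<in> F" "z \<noteq> x" "z j = x j"
        unfolding P_def by auto
      then show "x j \<in> (\<lambda>x. x j) ` (F - {x})"
        using image_eqI[of "x j" "\<lambda>x. x j" z "F - {x}"] by simp
    qed
    show ?thesis
    proof (cases "j \<in> P")
      case True
      then have "(\<lambda>x. x j) ` F = (\<lambda>x. x j) ` (F - {x})"
        using image mem by (simp add: insert_absorb)
      then show ?thesis
        using card_F le True by simp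
    next
      case False
      then have "card ((\<lambda>x. x j) ` F) = card ((\<lambda>x. x j) ` (F - {x})) + 1"
        using image mem assms(1) by simp
      then show ?thesis
        using card_F le False by simp
    qed
  qed
  then have "collision_excess M F
      \<le> (\<Sum>j\<in>{0..<M}. card (F - {x}) - card ((\<lambda>x. x j) ` (F - {x})) + of_bool (j \<in> P))"
    unfolding collision_excess_def by (rule sum_mono)
  also have "\<dots> = collision_excess M (F - {x}) + card P"
  proof -
    have "P \<subseteq> {0..<M}"
      unfolding P_def by auto
    then show ?thesis
      unfolding collision_excess_def by (simp add: sum.distrib Int_absorb1)
  qed
  finally show ?thesis
    unfolding collision_degree_def P_def .
qed

lemma collision_core_or_excess_le:
  assumes "finite F"
  shows "(\<exists>F'\<subseteq>F. F' \<noteq> {} \<and> (\<forall>x\<in>F'. k \<le> collision_degree M F' x))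
    \<or> collision_excess M F \<le> (k - 1) * card F"
  using assms
proof (induction "card F" arbitrary: F rule: less_induct)
  case less
  show ?case
  proof (cases "F = {} \<or> (\<forall>x\<in>F. k \<le> collision_degree M F x)")
    case True
    then show ?thesis by (auto simp: collision_excess_def)
  next
    case False
    then obtain x where x: "x \<in> F" "\<not> k \<le> collision_degree M F x"
      by blast
    have "card (F - {x}) < card F"
      by (rule card_Diff1_less[OF less.prems x(1)])
    then have "(\<exists>F'\<subseteq>F - {x}. F' \<noteq> {} \<and> (\<forall>x\<in>F'. k \<le> collision_degree M F' x))
      \<or> collision_excess M (F - {x}) \<le> (k - 1) * card (F - {x})"
      using less by simp
    moreover have "collision_excess M F \<le> (k - 1) * card F"
      if "collision_excess M (F - {x}) \<le> (k - 1) * card (F - {x})"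
    proof -
      have "collision_excess M F \<le> collision_excess M (F - {x}) + (k - 1)"
        using collision_excess_le_remove[OF less.prems x(1), of M] x(2) by linarith
      also have "\<dots> \<le> (k - 1) * card (F - {x}) + (k - 1)"
        using that by simp
      also have "\<dots> = (k - 1) * card F"
        unfolding card_Suc_Diff1[OF less.prems x(1), symmetric] by simp
      finally show ?thesis .
    qed
    ultimately show ?thesis by blast
  qed
qed

lemma ex_colliding_subset:
  assumes "finite F" "F \<noteq> {}" "\<forall>x\<in>F. k \<le> collision_degree M F x"
  shows "\<exists>S J. S \<subseteq> F \<and> S \<noteq> {} \<and> card S \<le> k + 1 \<and> J \<subseteq> {0..<M} \<and> card J = k
    \<and> (\<forall>j\<in>J. \<exists>y\<in>S. \<exists>z\<in>S. y \<noteq> z \<and> y j = z j)"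
proof -
  have "\<exists>S J. S \<subseteq> F \<and> S \<noteq> {} \<and> card S \<le> i + 1 \<and> J \<subseteq> {0..<M} \<and> card J = i
    \<and> (\<forall>j\<in>J. \<exists>y\<in>S. \<exists>z\<in>S. y \<noteq> z \<and> y j = z j)" if "i \<le> k" for i
    using that
  proof (induction i)
    case 0
    obtain x where "x \<in> F"
      using assms(2) by auto
    then show ?case
      by (intro exI[of _ "{x}"] exI[of _ "{}"]) auto
  next
    case (Suc i)
    then obtain S J where SJ: "S \<subseteq> F" "S \<noteq> {}" "card S \<le> i + 1" "J \<subseteq> {0..<M}" "card J = i"
      "\<forall>j\<in>J. \<exists>y\<in>S. \<exists>z\<in>S. y \<noteq> z \<and> y j = z j"
      by auto
    obtain y where y: "y \<in> S"
      using SJ(2) by auto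
    have fin: "finite S" "finite J"
      using SJ(1,4) assms(1) finite_subset by blast+
    have "\<not> {j\<in>{0..<M}. \<exists>z\<in>F. z \<noteq> y \<and> z j = y j} \<subseteq> J"
    proof
      assume "{j\<in>{0..<M}. \<exists>z\<in>F. z \<noteq> y \<and> z j = y j} \<subseteq> J"
      then have "collision_degree M F y \<le> card J"
        unfolding collision_degree_def using fin(2) by (intro card_mono) auto
      moreover have "k \<le> collision_degree M F y"
        using assms(3) y SJ(1) by blast
      ultimately show False
        using SJ(5) Suc.prems by linarith
    qed
    then obtain j z where j: "j < M" "j \<notin> J" and z: "z \<in> F" "z \<noteq> y" "z j = y j"
      by auto
    show ?case
    proof (intro exI[of _ "insert z S"] exI[of _ "insert j J"] conjI)
      show "card (insert z S) \<le> Suc i + 1"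
        using SJ(3) fin(1) by (simp add: card_insert_if)
      show "card (insert j J) = Suc i"
        using SJ(5) fin(2) j(2) by simp
      show "\<forall>j'\<in>insert j J. \<exists>y\<in>insert z S. \<exists>z'\<in>insert z S. y \<noteq> z' \<and> y j' = z' j'"
        using SJ(6) z y by blast
    qed (use SJ j z in auto)
  qed
  then show ?thesis by blast
qed

lemma collision_excess_ge:
  assumes "D \<subseteq> qspace q n" "M \<le> n"
  shows "M * (card D - q) \<le> collision_excess M D"
proof -
  have "card D - q \<le> card D - card ((\<lambda>x. x j) ` D)" if "j \<in> {0..<M}" for j
  proof -
    have "(\<lambda>x. x j) ` D \<subseteq> {1..q}"
      using assms that qspace_coordinate[of _ q n j] by force
    then have "card ((\<lambda>x. x j) ` D) \<le> card {1..q}"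
      by (intro card_mono) auto
    then show ?thesis by simp
  qed
  then show ?thesis
    using sum_mono[of "{0..<M}" "\<lambda>_. card D - q"] unfolding collision_excess_def by simp
qed

lemma ex_ball_card_gt_if_collision_core:
  assumes D: "D \<subseteq> qspace q n"
    and agree: "\<forall>x\<in>D. \<forall>y\<in>D. \<forall>i\<in>{M..<n}. x i = y i"
    and slack: "M \<le> n" "t + L \<le> M" "(L + 1) * (M - t) \<le> M + L"
    and large: "L < card D"
    and F: "F \<subseteq> D" "F \<noteq> {}" "\<forall>x\<in>F. L \<le> collision_degree M F x"
  shows "\<exists>v\<in>qspace q n. L < card (hball q n (real t) v \<inter> D)"
proof -
  have fin: "finite D"
    using D finite_qspace finite_subset by blast
  have "finite F"
    using F(1) fin by (rule finite_subset)
  then obtain S0 J where S0: "S0 \<subseteq> F" "S0 \<noteq> {}" "card S0 \<le> L + 1"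
    and J: "J \<subseteq> {0..<M}" "card J = L" "\<forall>j\<in>J. \<exists>y\<in>S0. \<exists>z\<in>S0. y \<noteq> z \<and> y j = z j"
    using ex_colliding_subset[OF _ F(2,3)] by blast
  have "L + 1 \<le> card D" "S0 \<subseteq> D"
    using large S0(1) F(1) by auto
  then obtain S where S: "S0 \<subseteq> S" "S \<subseteq> D" "card S = L + 1"
    using exists_subset_between[OF S0(3) _ _ fin] by blast
  have J': "\<forall>j\<in>J. \<exists>y\<in>S. \<exists>z\<in>S. y \<noteq> z \<and> y j = z j"
    using J(3) S(1) by blast
  have "S \<subseteq> qspace q n" "S \<noteq> {}" "card S \<le> L + 1"
    using S S0(2) D by auto
  moreover have "\<forall>x\<in>S. \<forall>y\<in>S. \<forall>i\<in>{M..<n}. x i = y i"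
    using S(2) agree by (meson subsetD)
  ultimately obtain v where v: "v \<in> qspace q n" "\<forall>w\<in>S. hamming n w v \<le> t"
    using ex_centre_of_collisions[OF _ _ _ _ J(1,2) J' slack] by blast
  have "S \<subseteq> hball q n (real t) v \<inter> D"
    using v(2) S(2) D unfolding hball_def by auto
  then have "card S \<le> card (hball q n (real t) v \<inter> D)"
    using fin by (intro card_mono) auto
  then show ?thesis
    using v(1) S(3) by (intro bexI[of _ v]) simp_all
qed

lemma card_agreeing_subset_le:
  assumes D: "D \<subseteq> qspace q n"
    and ball: "\<forall>v\<in>qspace q n. card (hball q n (real t) v \<inter> D) \<le> L"
    and agree: "\<forall>x\<in>D. \<forall>y\<in>D. \<forall>i\<in>{M..<n}. x i = y i"
    and slack: "M \<le> n" "t + L \<le> M" "(L + 1) * (M - t) \<le> M + L"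
    and large: "L < card D"
  shows "M * (card D - q) \<le> (L - 1) * card D"
proof -
  have fin: "finite D"
    using D finite_qspace finite_subset by blast
  have "\<not> (\<exists>F\<subseteq>D. F \<noteq> {} \<and> (\<forall>x\<in>F. L \<le> collision_degree M F x))"
    using ex_ball_card_gt_if_collision_core[OF D agree slack large] ball not_le by blast
  then have "collision_excess M D \<le> (L - 1) * card D"
    using collision_core_or_excess_le[OF fin, of L M] by argo
  with collision_excess_ge[OF D slack(1)] show ?thesis
    by (rule le_trans)
qed

lemma le_mult_one_plus_twice_div:
  fixes K c m q :: real
  assumes "m * K \<le> c * K + m * q" "2 * c \<le> m" "0 < m" "0 \<le> c" "0 \<le> K" "0 \<le> q"
  shows "K \<le> q * (1 + 2 * c / m)"
proof -
  have "2 * c * K \<le> m * K"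
    using assms by (intro mult_right_mono) auto
  then have "m * K \<le> m * (2 * q)"
    using assms(1) by linarith
  then have "K \<le> 2 * q"
    using assms(3) by simp
  then have "m * K \<le> m * (q + 2 * c * q / m)"
    using assms mult_left_mono[of K "2 * q" c] by (simp add: algebra_simps)
  then have "K \<le> q + 2 * c * q / m"
    using assms(3) by simp
  then show ?thesis
    by (simp add: algebra_simps)
qed

lemma card_agreeing_subset_le_max:
  assumes D: "D \<subseteq> qspace q n"
    and ball: "\<forall>v\<in>qspace q n. card (hball q n (real t) v \<inter> D) \<le> L"
    and agree: "\<forall>x\<in>D. \<forall>y\<in>D. \<forall>i\<in>{M..<n}. x i = y i"
    and slack: "M \<le> n" "t + L \<le> M" "(L + 1) * (M - t) \<le> M + L"
    and "1 \<le> L"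
  shows "real (card D) \<le> max (real q * (1 + 2 * (real L - 1) / real M)) (real L)"
proof (cases "card D \<le> L")
  case True
  then show ?thesis by simp
next
  case False
  have "M * card D \<le> M * (card D - q) + M * q"
    by (metis add_mult_distrib2 le_diff_conv mult_le_mono2 order_refl)
  then have "M * card D \<le> (L - 1) * card D + M * q"
    using card_agreeing_subset_le[OF D ball agree slack] False by linarith
  then have "real (M * card D) \<le> real ((L - 1) * card D + M * q)"
    by (simp only: of_nat_le_iff)
  then have "real M * real (card D) \<le> (real L - 1) * real (card D) + real M * real q"
    using \<open>1 \<le> L\<close> by (simp add: of_nat_diff)
  moreover have "L * L \<le> M"
  proof -
    have "(L + 1) * L \<le> (L + 1) * (M - t)"
      using slack(2) by (intro mult_le_mono2) linarith
    then show ?thesis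
      using slack(3) by (simp add: algebra_simps)
  qed
  then have "2 * (real L - 1) \<le> real M" "0 < real M"
    using \<open>1 \<le> L\<close> by (cases L; simp; linarith)+
  ultimately have "real (card D) \<le> real q * (1 + 2 * (real L - 1) / real M)"
    using \<open>1 \<le> L\<close> by (intro le_mult_one_plus_twice_div) auto
  then show ?thesis by simp
qed

lemma card_le_by_agreeing_subsets:
  assumes C: "C \<subseteq> qspace q n"
    and agreeing: "\<And>D. D \<subseteq> C \<Longrightarrow> \<forall>x\<in>D. \<forall>y\<in>D. \<forall>i\<in>{M..<n}. x i = y i \<Longrightarrow> real (card D) \<le> B"
  shows "real (card C) \<le> B * real q ^ (n - M)"
proof -
  define \<pi> where "\<pi> x = restrict x {M..<n}" for x :: "nat \<Rightarrow> nat"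
  define P where "P = PiE {M..<n} (\<lambda>_. {1..q})"
  have fin: "finite C" "finite P"
    using C finite_qspace finite_subset unfolding P_def by (blast, simp add: finite_PiE)
  have "\<pi> ` C \<subseteq> P"
    using C unfolding \<pi>_def P_def qspace_def by (auto simp: PiE_iff)
  then have "card C = (\<Sum>p\<in>P. card {x\<in>C. \<pi> x = p})"
    unfolding card_eq_sum by (rule sum.group[OF fin, symmetric])
  also have "real \<dots> \<le> (\<Sum>p\<in>P. B)"
    unfolding of_nat_sum
  proof (rule sum_mono)
    fix p
    have "\<forall>x\<in>{x\<in>C. \<pi> x = p}. \<forall>y\<in>{x\<in>C. \<pi> x = p}. \<forall>i\<in>{M..<n}. x i = y i"
      unfolding \<pi>_def by (metis (mono_tags, lifting) mem_Collect_eq restrict_apply')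
    then show "real (card {x\<in>C. \<pi> x = p}) \<le> B"
      by (intro agreeing) auto
  qed
  also have "\<dots> = B * real q ^ (n - M)"
    unfolding P_def by (simp add: card_PiE)
  finally show ?thesis .
qed

lemma list_decodable_card_le:
  assumes LD: "list_decodable q n r L C" and t: "r * real n = real t" and "1 \<le> L"
    and M: "M = (L + 1) * t div L + 1" "L * (L + 1) \<le> M" "M \<le> n"
  shows "real (card C) \<le> max (real q * (1 + 2 * (real L - 1) / real M)) (real L) * real q ^ (n - M)"
proof -
  have C: "C \<subseteq> qspace q n"
    and ball: "\<forall>v\<in>qspace q n. card (hball q n (real t) v \<inter> C) \<le> L"
    using LD t unfolding list_decodable_def by auto
  have "(L + 1) * t < L * M"
    using M(1) dividend_less_times_div[of L "(L + 1) * t"] \<open>1 \<le> L\<close> by simp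
  then have "(L + 1) * (t + L) < (L + 1) * M"
    using M(2) by (simp add: algebra_simps)
  then have "t + L < M"
    by (rule mult_less_cancel1[THEN iffD1, THEN conjunct2])
  moreover have "L * (M - 1) \<le> (L + 1) * t"
    using M(1) by simp
  then have "(L + 1) * (M - t) \<le> M + L"
    using \<open>t + L < M\<close> by (simp add: algebra_simps diff_mult_distrib2)
  ultimately have slack: "M \<le> n" "t + L \<le> M" "(L + 1) * (M - t) \<le> M + L"
    using M(3) by auto
  show ?thesis
  proof (rule card_le_by_agreeing_subsets[OF C])
    fix D
    assume D: "D \<subseteq> C" and agree: "\<forall>x\<in>D. \<forall>y\<in>D. \<forall>i\<in>{M..<n}. x i = y i"
    have "card (hball q n (real t) v \<inter> D) \<le> L" if "v \<in> qspace q n" for v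
    proof -
      have "card (hball q n (real t) v \<inter> D) \<le> card (hball q n (real t) v \<inter> C)"
        using D C finite_qspace finite_subset by (intro card_mono) blast+
      with ball that show ?thesis
        by fastforce
    qed
    then show "real (card D) \<le> max (real q * (1 + 2 * (real L - 1) / real M)) (real L)"
      using card_agreeing_subset_le_max[OF _ _ agree slack \<open>1 \<le> L\<close>] D C by blast
  qed
qed

lemma list_decodable_card_le_floor:
  fixes a :: real
  assumes LD: "list_decodable q n r L C" and t: "r * real n = real t" and "1 \<le> L"
    and a: "a = (real L + 1) / real L * r" "a < 1"
    and large: "real (L * (L + 1)) \<le> a * real n"
  shows "real (card C) \<le> max (real q * (1 + 2 * (real L - 1) / (a * real n))) (real L)
    * real q powi (int n - (\<lfloor>a * real n\<rfloor> + 1))"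
proof -
  define M where "M = (L + 1) * t div L + 1"
  have an: "a * real n = real ((L + 1) * t) / real L"
    using a(1) t by (simp add: field_simps)
  have floor: "\<lfloor>a * real n\<rfloor> + 1 = int M"
    unfolding M_def an floor_divide_of_nat_eq by simp
  then have "\<lfloor>a * real n\<rfloor> = int M - 1"
    by simp
  then have M_bounds: "real M - 1 \<le> a * real n" "a * real n < real M"
    using floor_correct[of "a * real n"] by simp_all
  have "0 < L * (L + 1)"
    using \<open>1 \<le> L\<close> by simp
  then have "0 < real (L * (L + 1))"
    by (simp only: of_nat_0_less_iff)
  then have pos: "0 < a * real n"
    using large by linarith
  have "L * (L + 1) \<le> M"
    using large M_bounds(2) by linarith
  moreover have "M \<le> n"
  proof -
    have "0 < real n"
      using pos by (cases "n = 0") auto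
    then have "a * real n < real n"
      using mult_strict_right_mono[of a 1 "real n"] a(2) by simp
    then have "real M < real (n + 1)"
      using M_bounds(1) by simp
    then show ?thesis
      by (simp only: of_nat_less_iff)
  qed
  ultimately have "real (card C)
    \<le> max (real q * (1 + 2 * (real L - 1) / real M)) (real L) * real q ^ (n - M)"
    using list_decodable_card_le[OF LD t \<open>1 \<le> L\<close> M_def] by blast
  also have "\<dots> \<le> max (real q * (1 + 2 * (real L - 1) / (a * real n))) (real L) * real q ^ (n - M)"
    using M_bounds(2) pos \<open>1 \<le> L\<close>
    by (intro mult_right_mono max.mono mult_left_mono add_left_mono divide_left_mono) auto
  also have "int n - (\<lfloor>a * real n\<rfloor> + 1) = int (n - M)"
    using floor \<open>M \<le> n\<close> by simp
  then have "real q ^ (n - M) = real q powi (int n - (\<lfloor>a * real n\<rfloor> + 1))"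
    by (simp add: power_int_of_nat)
  finally show ?thesis .
qed

lemma card_le_max_mult_powi_pred:
  assumes "C \<subseteq> qspace q n" "1 \<le> n"
  shows "real (card C) \<le> max (real q) (real L) * real q powi (int n - 1)"
proof -
  obtain m where m: "n = Suc m"
    using assms(2) by (metis One_nat_def Suc_le_D)
  then have "card C \<le> q * q ^ m"
    using card_le_qspace_power[OF assms(1)] by simp
  then have "real (card C) \<le> real q * real q ^ m"
    by (metis of_nat_le_iff of_nat_mult of_nat_power)
  also have "\<dots> \<le> max (real q) (real L) * real q ^ m"
    by (intro mult_right_mono) auto
  also have "real q ^ m = real q powi (int n - 1)"
    using m by (simp add: power_int_of_nat)
  finally show ?thesis .
qed

theorem theorem3p1:
  fixes L :: nat and r :: real
  assumes "L \<ge> 1" and "0 \<le> r" and "r < real L / (real L + 1)"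
  shows "\<exists>(N::nat) (g::nat \<Rightarrow> real). (\<forall>n. g n \<ge> 0) \<and> g \<longlonglongrightarrow> 0 \<and>
    (\<forall>(q::nat) (n::nat) C. q \<ge> 2 \<longrightarrow> n \<ge> N \<longrightarrow> (\<exists>t::nat. r * real n = real t) \<longrightarrow>
       list_decodable q n r L C \<longrightarrow>
       real (card C) \<le> max (real q * (1 + g n)) (real L) *
         (real q) powi (int n - (\<lfloor>(real L + 1) / real L * r * real n\<rfloor> + 1)))"
proof -
  define a where "a = (real L + 1) / real L * r"
  define g where "g n = 2 * (real L - 1) / (a * real n)" for n :: nat
  define N where "N = nat \<lceil>real (L * (L + 1)) / a\<rceil> + 1"
  have a: "0 \<le> a" "a < 1"
    using assms unfolding a_def by (auto simp: field_simps)
  have g_nonneg: "\<forall>n. 0 \<le> g n"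
    using a(1) assms(1) unfolding g_def by simp
  have g_lim: "g \<longlonglongrightarrow> 0"
    unfolding g_def using lim_const_over_n[of "2 * (real L - 1) / a"] by simp
  have bound: "real (card C) \<le> max (real q * (1 + g n)) (real L)
      * real q powi (int n - (\<lfloor>(real L + 1) / real L * r * real n\<rfloor> + 1))"
    if "N \<le> n" "r * real n = real t" "list_decodable q n r L C" for q n t C
  proof (cases "r = 0")
    case True
    \<comment> \<open>Then \<open>a = 0\<close> and \<open>g n = 0\<close>, since \<open>x / 0 = 0\<close>.\<close>
    have "1 \<le> n" "g n = 0"
      using that(1) True unfolding N_def g_def a_def by simp_all
    then show ?thesis
      using card_le_max_mult_powi_pred[of C q n L] that(3) True
      unfolding list_decodable_def by simp
  next
    case False
    then have "0 < a"
      using assms(1,2) unfolding a_def by simp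
    moreover have "nat \<lceil>real (L * (L + 1)) / a\<rceil> \<le> n"
      using that(1) unfolding N_def by (simp del: nat_ceiling_le_eq)
    ultimately have "real (L * (L + 1)) \<le> a * real n"
      by (simp add: pos_divide_le_eq mult.commute)
    then show ?thesis
      using list_decodable_card_le_floor[OF that(3,2) assms(1) a_def a(2)]
      unfolding g_def a_def by simp
  qed
  show ?thesis
    using g_nonneg g_lim bound by (intro exI[of _ N] exI[of _ g]) blast
qed

end
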